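(* Every neighborhood of $(\pi/4,0)$ in $\{(r,\epsilon):r>0,\ \epsilon\ge0,\ r+\epsilon<\pi/2\}$ contains a point $(r,\epsilon)$ with $\epsilon>0$ such that $(\mathcal{Y}^\parallel_{0,r,\epsilon})'(0)=0$.
   Context: Fix $\varphi\in C^\infty(\mathbb{R})$ with $0\le\varphi\le1$, $\varphi(x)=0$ for $x\le0$, $\varphi(x)=1$ for $x\ge1$, and let $H$ be the Heaviside function ($H(x)=1$ for $x>0$, $H(x)=0$ for $x\le0$). For $r>0$, $\epsilon\ge0$ with $r+\epsilon<\pi/2$ and $\rho\ge0$ set $K^\parallel_{r,\epsilon}(\rho)=1-2\varphi((\rho-r)/\epsilon)$ if $\epsilon>0$ and $K^\parallel_{r,0}(\rho)=1-2H(\rho-r)$. $\mathcal{Y}^\parallel_{0,r,\epsilon}$ denotes the unique solution on $[0,\infty)$ of $\mathcal{Y}''(t)+K^\parallel_{r,\epsilon}(t)\mathcal{Y}(t)=0$ (for $\epsilon=0$ a $C^1$ weak solution, i.e. solving the equation for $t\ne r$) with $\mathcal{Y}(t)=e^{-t}$ for all $t\ge r+\epsilon$. (This is the stable Jacobi solution along radial geodesics of $g_{r,\epsilon}$; if its derivative vanishes at $0$, $\mathcal{Y}^\parallel_{0,r,\epsilon}(|t|)E(t)$, $E$ parallel and normal, is a Jacobi field decaying as $t\to\pm\infty$.) *)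

theory Defs
  imports "HOL-Analysis.Analysis"
begin

definition smooth_real :: "(real \<Rightarrow> real) \<Rightarrow> bool" where
  "smooth_real f \<longleftrightarrow> (\<forall>n x. ((deriv ^^ n) f) differentiable (at x))"

definition cutoff :: "(real \<Rightarrow> real) \<Rightarrow> bool" where
  "cutoff \<phi> \<longleftrightarrow> smooth_real \<phi> \<and> (\<forall>x. 0 \<le> \<phi> x \<and> \<phi> x \<le> 1)
     \<and> (\<forall>x. x \<le> 0 \<longrightarrow> \<phi> x = 0) \<and> (\<forall>x. x \<ge> 1 \<longrightarrow> \<phi> x = 1)"

definition heaviside :: "real \<Rightarrow> real" where
  "heaviside x = (if x > 0 then 1 else 0)"

definition Kpar :: "(real \<Rightarrow> real) \<Rightarrow> real \<Rightarrow> real \<Rightarrow> real \<Rightarrow> real" where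
  "Kpar \<phi> r \<epsilon> \<rho> = (if \<epsilon> > 0 then 1 - 2 * \<phi> ((\<rho> - r) / \<epsilon>) else 1 - 2 * heaviside (\<rho> - r))"

definition stable_sol :: "(real \<Rightarrow> real) \<Rightarrow> real \<Rightarrow> real \<Rightarrow> (real \<Rightarrow> real) \<Rightarrow> (real \<Rightarrow> real) \<Rightarrow> bool" where
  "stable_sol \<phi> r \<epsilon> Y D \<longleftrightarrow>
     (\<forall>t\<ge>0. (Y has_real_derivative D t) (at t within {0..}))
   \<and> continuous_on {0..} D
   \<and> (\<forall>t\<ge>0. (\<epsilon> = 0 \<longrightarrow> t \<noteq> r) \<longrightarrow>
         (D has_real_derivative (- Kpar \<phi> r \<epsilon> t * Y t)) (at t within {0..}))
   \<and> (\<forall>t\<ge>r + \<epsilon>. Y t = exp (- t))"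

end

theory Submission
  imports Defs
begin

text \<open>On
  \<open>[r, r + \<epsilon>]\<close> the coefficient is a translate of \<open>K\<^sub>0(u) = 1 - 2 \<phi>(u/\<epsilon>)\<close>, and beyond
  \<open>r + \<epsilon>\<close> the solution is \<open>e\<^sup>-\<^sup>t\<close>; so, up to the factor \<open>e\<^sup>-\<^sup>r\<close>, the data \<open>(a, b)\<close> of the
  stable solution at \<open>t = r\<close> come from solving \<open>K\<^sub>0\<close> backwards on \<open>[0, \<epsilon>]\<close> from
  \<open>(e\<^sup>-\<^sup>\<epsilon>, -e\<^sup>-\<^sup>\<epsilon>)\<close> and do not depend on \<open>r\<close>. On \<open>[0, r]\<close> we have \<open>K = 1\<close>, the solution is a
  rotation of \<open>(a, b)\<close>, and its derivative vanishes at \<open>0\<close> exactly when \<open>tan r = -b/a\<close>. A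
  contraction argument gives \<open>|(a, b) - (1, -1)| = O(\<epsilon>)\<close>, so \<open>r = arctan (-b/a) \<rightarrow> \<pi>/4\<close> as
  \<open>\<epsilon> \<rightarrow> 0\<close>.\<close>

definition jacobi_system :: "(real \<Rightarrow> real) \<Rightarrow> real \<Rightarrow> real \<times> real \<Rightarrow> real \<times> real" where
  "jacobi_system k t p = (snd p, - k t * fst p)"

definition jacobi_solution_on :: "(real \<Rightarrow> real) \<Rightarrow> real set \<Rightarrow> (real \<Rightarrow> real \<times> real) \<Rightarrow> bool" where
  "jacobi_solution_on k S Z \<longleftrightarrow>
     (\<forall>t\<in>S. (Z has_vector_derivative jacobi_system k t (Z t)) (at t within S))"

lemma jacobi_system_diff: "jacobi_system k t p - jacobi_system k t q = jacobi_system k t (p - q)"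
  unfolding jacobi_system_def by (simp add: algebra_simps)

lemma norm_jacobi_system_le:
  assumes "\<bar>k t\<bar> \<le> 1"
  shows "norm (jacobi_system k t p) \<le> norm p"
proof (cases p)
  case (Pair x y)
  have "(k t)\<^sup>2 \<le> 1" using assms by (simp add: abs_square_le_1)
  then have "(k t * x)\<^sup>2 \<le> x\<^sup>2"
    using mult_right_mono[of "(k t)\<^sup>2" 1 "x\<^sup>2"] by (simp add: power_mult_distrib)
  then show ?thesis
    unfolding Pair jacobi_system_def norm_Pair by (simp add: add.commute)
qed

lemma continuous_on_jacobi_system:
  "continuous_on S k \<Longrightarrow> continuous_on S f \<Longrightarrow> continuous_on S (\<lambda>t. jacobi_system k t (f t))"
  unfolding jacobi_system_def by (intro continuous_intros)

lemma has_vector_derivative_integral_equation: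
  fixes h :: "real \<Rightarrow> 'a::banach"
  assumes h: "continuous_on {a..b} h" and V: "\<And>u. u \<in> {a..b} \<Longrightarrow> V u = c - integral {u..b} h"
    and u: "u \<in> {a..b}"
  shows "(V has_vector_derivative h u) (at u within {a..b})"
proof -
  have "((\<lambda>u. c - integral {u..b} h) has_vector_derivative 0 - - h u) (at u within {a..b})"
    by (intro has_vector_derivative_diff has_vector_derivative_const
        integral_has_vector_derivative'[OF h u])
  then have "((\<lambda>u. c - integral {u..b} h) has_vector_derivative h u) (at u within {a..b})"
    by simp
  then show ?thesis
    by (rule has_vector_derivative_transform[OF u, rotated]) (rule V)
qed

lemma norm_integral_jacobi_system_le:
  assumes v: "v \<in> {0..\<epsilon>}"
    and k: "continuous_on {0..\<epsilon>} k" "\<And>t. t \<in> {0..\<epsilon>} \<Longrightarrow> \<bar>k t\<bar> \<le> 1"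
    and f: "continuous_on {0..\<epsilon>} f" "\<And>s. s \<in> {0..\<epsilon>} \<Longrightarrow> norm (f s) \<le> B"
  shows "norm (integral {v..\<epsilon>} (\<lambda>s. jacobi_system k s (f s))) \<le> B * \<epsilon>"
proof -
  have "norm (integral {v..\<epsilon>} (\<lambda>s. jacobi_system k s (f s))) \<le> B * (\<epsilon> - v)"
    using v k(2) by (intro integral_bound continuous_on_jacobi_system continuous_on_subset[OF k(1)]
        continuous_on_subset[OF f(1)] order_trans[OF norm_jacobi_system_le f(2)]) auto
  also have "\<dots> \<le> B * \<epsilon>"
    using v order_trans[OF norm_ge_zero f(2)[of \<epsilon>]] by (intro mult_left_mono) auto
  finally show ?thesis .
qed

lemma norm_integral_jacobi_system_diff_le:
  assumes v: "v \<in> {0..\<epsilon>}"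
    and k: "continuous_on {0..\<epsilon>} k" "\<And>t. t \<in> {0..\<epsilon>} \<Longrightarrow> \<bar>k t\<bar> \<le> 1"
    and f: "continuous_on {0..\<epsilon>} f" and g: "continuous_on {0..\<epsilon>} g"
    and close: "\<And>s. s \<in> {0..\<epsilon>} \<Longrightarrow> norm (f s - g s) \<le> B"
  shows "norm (integral {v..\<epsilon>} (\<lambda>s. jacobi_system k s (f s))
           - integral {v..\<epsilon>} (\<lambda>s. jacobi_system k s (g s))) \<le> B * \<epsilon>"
proof -
  have "(\<lambda>s. jacobi_system k s (h s)) integrable_on {v..\<epsilon>}" if "continuous_on {0..\<epsilon>} h" for h
    using v by (intro integrable_continuous_real continuous_on_subset[OF continuous_on_jacobi_system[OF k(1) that]])
      auto
  then have "integral {v..\<epsilon>} (\<lambda>s. jacobi_system k s (f s)) - integral {v..\<epsilon>} (\<lambda>s. jacobi_system k s (g s))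
      = integral {v..\<epsilon>} (\<lambda>s. jacobi_system k s (f s - g s))"
    using f g by (simp add: integral_diff[symmetric] jacobi_system_diff)
  also have "norm \<dots> \<le> B * \<epsilon>"
    using v k f g close by (intro norm_integral_jacobi_system_le continuous_on_diff)
  finally show ?thesis .
qed

lemma jacobi_integral_equation_solvable:
  fixes c :: "real \<times> real"
  assumes eps: "0 < \<epsilon>" "\<epsilon> < 1"
    and k: "continuous_on {0..\<epsilon>} k" "\<And>t. t \<in> {0..\<epsilon>} \<Longrightarrow> \<bar>k t\<bar> \<le> 1"
  shows "\<exists>V. continuous_on {0..\<epsilon>} V \<and>
           (\<forall>u\<in>{0..\<epsilon>}. V u = c - integral {u..\<epsilon>} (\<lambda>s. jacobi_system k s (V s)))"
proof -
  text \<open>Clamping the lower limit of integration to \<open>[0, \<epsilon>]\<close> extends the integral operator to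
    bounded continuous functions on the whole line, where Banach's fixed-point theorem applies.\<close>
  define cl where "cl u = max 0 (min \<epsilon> u)" for u
  have cl: "cl u \<in> {0..\<epsilon>}" "u \<in> {0..\<epsilon>} \<Longrightarrow> cl u = u" for u
    using eps unfolding cl_def by auto
  have continuous_cl: "continuous_on UNIV cl"
    unfolding cl_def by (intro continuous_intros)
  define G where "G x u = c - integral {cl u..\<epsilon>} (\<lambda>s. jacobi_system k s (apply_bcontfun x s))"
    for x :: "real \<Rightarrow>\<^sub>C (real \<times> real)" and u
  have G: "G x \<in> bcontfun" for x
  proof (rule bcontfun_normI)
    have integrand: "continuous_on {0..\<epsilon>} (\<lambda>s. jacobi_system k s (apply_bcontfun x s))"
      by (intro continuous_on_jacobi_system k(1)) simp
    have "continuous_on {0..\<epsilon>} (\<lambda>u. integral {u..\<epsilon>} (\<lambda>s. jacobi_system k s (apply_bcontfun x s)))"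
      unfolding continuous_on_eq_continuous_within
      using has_vector_derivative_continuous[OF integral_has_vector_derivative'[OF integrand]] by blast
    then have "continuous_on UNIV (\<lambda>u. integral {cl u..\<epsilon>} (\<lambda>s. jacobi_system k s (apply_bcontfun x s)))"
      by (rule continuous_on_compose2[OF _ continuous_cl]) (use cl in auto)
    then show "continuous_on UNIV (G x)"
      unfolding G_def by (intro continuous_intros)
  next
    fix u
    have "norm (integral {cl u..\<epsilon>} (\<lambda>s. jacobi_system k s (apply_bcontfun x s))) \<le> norm x * \<epsilon>"
      using cl(1) k by (intro norm_integral_jacobi_system_le) (simp_all add: norm_bounded)
    then show "norm (G x u) \<le> norm c + norm x * \<epsilon>"
      unfolding G_def by (rule order_trans[OF norm_triangle_ineq4 add_left_mono])
  qed
  define T where "T x = Bcontfun (G x)" for x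
  have T: "apply_bcontfun (T x) = G x" for x
    unfolding T_def using G by (simp add: Bcontfun_inverse)
  have "\<forall>x y. dist (T x) (T y) \<le> \<epsilon> * dist x y"
  proof (intro allI dist_bound)
    fix x y u
    let ?F = "\<lambda>z s. jacobi_system k s (apply_bcontfun z s)"
    have "dist (T x u) (T y u) = norm (integral {cl u..\<epsilon>} (?F x) - integral {cl u..\<epsilon>} (?F y))"
      unfolding T G_def dist_norm by (simp add: norm_minus_commute)
    also have "\<dots> \<le> dist x y * \<epsilon>"
    proof (rule norm_integral_jacobi_system_diff_le[OF cl(1) k])
      show "norm (apply_bcontfun x s - apply_bcontfun y s) \<le> dist x y" for s
        using dist_bounded[of x s y] by (simp add: dist_norm)
    qed simp_all
    finally show "dist (T x u) (T y u) \<le> \<epsilon> * dist x y"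
      by (simp add: mult.commute)
  qed
  then obtain x where "T x = x"
    using banach_fix_type[of \<epsilon> T] eps by auto
  then have fixed_point: "apply_bcontfun x u = G x u" for u
    using T by metis
  show ?thesis
  proof (intro exI[of _ "apply_bcontfun x"] conjI ballI)
    fix u :: real assume "u \<in> {0..\<epsilon>}"
    then show "apply_bcontfun x u = c - integral {u..\<epsilon>} (\<lambda>s. jacobi_system k s (apply_bcontfun x s))"
      using fixed_point[of u] by (simp add: G_def cl(2))
  qed simp
qed

lemma jacobi_integral_equation_bound:
  fixes c :: "real \<times> real"
  assumes eps: "0 < \<epsilon>" "\<epsilon> \<le> 1/2"
    and k: "continuous_on {0..\<epsilon>} k" "\<And>t. t \<in> {0..\<epsilon>} \<Longrightarrow> \<bar>k t\<bar> \<le> 1"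
    and V: "continuous_on {0..\<epsilon>} V"
      "\<And>u. u \<in> {0..\<epsilon>} \<Longrightarrow> V u = c - integral {u..\<epsilon>} (\<lambda>s. jacobi_system k s (V s))"
  shows "norm (V 0 - c) \<le> 2 * \<epsilon> * norm c"
proof -
  obtain u\<^sub>0 where u\<^sub>0: "u\<^sub>0 \<in> {0..\<epsilon>}" and maximal: "\<And>u. u \<in> {0..\<epsilon>} \<Longrightarrow> norm (V u) \<le> norm (V u\<^sub>0)"
    using continuous_attains_sup[OF compact_Icc _ continuous_on_norm[OF V(1)]] eps by auto
  define M where "M = norm (V u\<^sub>0)"
  have integral_le: "norm (integral {u..\<epsilon>} (\<lambda>s. jacobi_system k s (V s))) \<le> M * \<epsilon>"
    if "u \<in> {0..\<epsilon>}" for u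
    unfolding M_def by (rule norm_integral_jacobi_system_le[OF that k V(1) maximal])
  have "M \<le> norm c + M * \<epsilon>"
    using order_trans[OF norm_triangle_ineq4[of c] add_left_mono[OF integral_le[OF u\<^sub>0]]]
    unfolding M_def V(2)[OF u\<^sub>0, symmetric] .
  moreover have "M * \<epsilon> \<le> M * (1/2)"
    using eps unfolding M_def by (intro mult_left_mono) auto
  ultimately have "M \<le> 2 * norm c"
    by linarith
  have "norm (V 0 - c) \<le> M * \<epsilon>"
    using integral_le[of 0] eps by (simp add: V(2)[of 0])
  also have "\<dots> \<le> 2 * \<epsilon> * norm c"
    using mult_right_mono[OF \<open>M \<le> 2 * norm c\<close>, of \<epsilon>] eps by (simp add: algebra_simps)
  finally show ?thesis .
qed

lemma jacobi_terminal_value_problem: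
  fixes c :: "real \<times> real"
  assumes eps: "0 < \<epsilon>" "\<epsilon> \<le> 1/2"
    and k: "continuous_on {0..\<epsilon>} k" "\<And>t. t \<in> {0..\<epsilon>} \<Longrightarrow> \<bar>k t\<bar> \<le> 1"
  obtains V where "jacobi_solution_on k {0..\<epsilon>} V" "V \<epsilon> = c" "norm (V 0 - c) \<le> 2 * \<epsilon> * norm c"
proof -
  obtain V where V: "continuous_on {0..\<epsilon>} V"
    "\<And>u. u \<in> {0..\<epsilon>} \<Longrightarrow> V u = c - integral {u..\<epsilon>} (\<lambda>s. jacobi_system k s (V s))"
    using jacobi_integral_equation_solvable[OF eps(1) _ k, of c] eps by auto
  have "jacobi_solution_on k {0..\<epsilon>} V"
    unfolding jacobi_solution_on_def
    by (intro ballI has_vector_derivative_integral_equation[OF continuous_on_jacobi_system[OF k(1) V(1)] V(2)])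
  moreover have "V \<epsilon> = c"
    using V(2)[of \<epsilon>] eps by simp
  ultimately show ?thesis
    using that jacobi_integral_equation_bound[OF eps k V] by blast
qed

lemma has_vector_derivative_fst:
  "(Z has_vector_derivative v) F \<Longrightarrow> ((\<lambda>t. fst (Z t)) has_real_derivative fst v) F"
  unfolding has_real_derivative_iff_has_vector_derivative has_vector_derivative_def
  by (drule has_derivative_fst) simp

lemma has_vector_derivative_snd:
  "(Z has_vector_derivative v) F \<Longrightarrow> ((\<lambda>t. snd (Z t)) has_real_derivative snd v) F"
  unfolding has_real_derivative_iff_has_vector_derivative has_vector_derivative_def
  by (drule has_derivative_snd) simp

lemma jacobi_solution_on_cong:
  assumes "\<And>t. t \<in> S \<Longrightarrow> k t = k' t" and "jacobi_solution_on k S Z"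
  shows "jacobi_solution_on k' S Z"
  using assms unfolding jacobi_solution_on_def jacobi_system_def by simp

lemma jacobi_solution_on_scaleR:
  assumes "jacobi_solution_on k S Z"
  shows "jacobi_solution_on k S (\<lambda>t. c *\<^sub>R Z t)"
  unfolding jacobi_solution_on_def
proof
  fix t assume "t \<in> S"
  then have "((\<lambda>t. c *\<^sub>R Z t) has_vector_derivative c *\<^sub>R jacobi_system k t (Z t)) (at t within S)"
    using assms unfolding jacobi_solution_on_def
    by (auto intro: bounded_linear.has_vector_derivative[OF bounded_linear_scaleR_right])
  then show "((\<lambda>t. c *\<^sub>R Z t) has_vector_derivative jacobi_system k t (c *\<^sub>R Z t)) (at t within S)"
    by (simp add: jacobi_system_def mult.left_commute)
qed

lemma jacobi_solution_on_shift:
  assumes "jacobi_solution_on k {a..b} Z"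
  shows "jacobi_solution_on (\<lambda>t. k (t - r)) {a + r..b + r} (\<lambda>t. Z (t - r))"
  unfolding jacobi_solution_on_def
proof
  fix t assume t: "t \<in> {a + r..b + r}"
  have "((\<lambda>t. t - r) has_vector_derivative 1) (at t within {a + r..b + r})"
    by (auto intro!: derivative_eq_intros simp: has_real_derivative_iff_has_vector_derivative[symmetric])
  moreover have "(\<lambda>t. t - r) ` {a + r..b + r} = {a..b}"
    by (auto simp: image_iff intro: bexI[of _ "_ + r"])
  ultimately show "((\<lambda>t. Z (t - r)) has_vector_derivative jacobi_system (\<lambda>t. k (t - r)) t (Z (t - r)))
      (at t within {a + r..b + r})"
    using vector_diff_chain_within[of "\<lambda>t. t - r" 1 t "{a + r..b + r}" Z] assms t
    unfolding jacobi_solution_on_def jacobi_system_def by (auto simp: o_def)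
qed

lemma jacobi_solution_rotation:
  "jacobi_solution_on (\<lambda>_. 1) S
     (\<lambda>t. (a * cos (t - r) + b * sin (t - r), b * cos (t - r) - a * sin (t - r)))"
  unfolding jacobi_solution_on_def jacobi_system_def
  by (auto intro!: has_vector_derivative_Pair derivative_eq_intros
      simp: has_real_derivative_iff_has_vector_derivative[symmetric] algebra_simps)

lemma jacobi_solution_exp:
  "jacobi_solution_on (\<lambda>_. -1) S (\<lambda>t. (exp (- t), - exp (- t)))"
  unfolding jacobi_solution_on_def jacobi_system_def
  by (auto intro!: has_vector_derivative_Pair derivative_eq_intros
      simp: has_real_derivative_iff_has_vector_derivative[symmetric])

lemma jacobi_solution_on_glue:
  assumes "a \<le> b" "f b = g b"
    and f: "jacobi_solution_on k {a..b} f" and g: "jacobi_solution_on k {b..} g"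
  shows "jacobi_solution_on k {a..} (\<lambda>t. if t \<in> {a..b} then f t else g t)"
  unfolding jacobi_solution_on_def
proof
  fix t assume "t \<in> {a..}"
  have boundary: "closure {a..b} \<inter> closure {b<..} = {b}" "insert b {a..b} = {a..b}"
      "insert b {b<..} = {b..}"
    using \<open>a \<le> b\<close> by auto
  have "((\<lambda>t. if t \<in> {a..b} then f t else g t) has_vector_derivative
      (if t \<in> {a..b} then jacobi_system k t (f t) else jacobi_system k t (g t))) (at t within {a..})"
    by (rule has_vector_derivative_If_within_closures[where T = "{b<..}"])
      (use \<open>t \<in> {a..}\<close> assms f g in \<open>auto simp: boundary jacobi_solution_on_def\<close>)
  then show "((\<lambda>t. if t \<in> {a..b} then f t else g t) has_vector_derivative
      jacobi_system k t (if t \<in> {a..b} then f t else g t)) (at t within {a..})"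
    by (simp add: if_distrib)
qed

lemma cutoff_continuous:
  assumes "cutoff \<phi>"
  shows "continuous_on S \<phi>"
proof -
  have "\<phi> differentiable (at x)" for x
    using assms unfolding cutoff_def smooth_real_def by (metis funpow_0)
  then show ?thesis
    by (meson continuous_at_imp_continuous_on differentiable_imp_continuous_within)
qed

lemma Kpar_shift: "Kpar \<phi> r \<epsilon> t = Kpar \<phi> 0 \<epsilon> (t - r)"
  by (simp add: Kpar_def)

lemma Kpar_before:
  assumes "cutoff \<phi>" "0 < \<epsilon>" "t \<le> r"
  shows "Kpar \<phi> r \<epsilon> t = 1"
proof -
  have "(t - r) / \<epsilon> \<le> 0"
    using assms by (simp add: divide_nonpos_pos)
  then show ?thesis
    using assms unfolding Kpar_def cutoff_def by simp
qed

lemma Kpar_after: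
  assumes "cutoff \<phi>" "0 < \<epsilon>" "r + \<epsilon> \<le> t"
  shows "Kpar \<phi> r \<epsilon> t = -1"
proof -
  have "(t - r) / \<epsilon> \<ge> 1"
    using assms by (simp add: pos_le_divide_eq)
  then show ?thesis
    using assms unfolding Kpar_def cutoff_def by simp
qed

lemma abs_Kpar_le_1:
  assumes "cutoff \<phi>"
  shows "\<bar>Kpar \<phi> r \<epsilon> t\<bar> \<le> 1"
  using assms unfolding Kpar_def cutoff_def heaviside_def
  by (smt (verit))

lemma continuous_on_Kpar:
  assumes "cutoff \<phi>" "0 < \<epsilon>"
  shows "continuous_on S (Kpar \<phi> r \<epsilon>)"
  using assms unfolding Kpar_def
  by (auto intro!: continuous_intros continuous_on_compose2[OF cutoff_continuous[OF assms(1)]])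

lemma stable_sol_of_jacobi_solution:
  assumes Z: "jacobi_solution_on (Kpar \<phi> r \<epsilon>) {0..} Z"
    and decay: "\<And>t. r + \<epsilon> \<le> t \<Longrightarrow> fst (Z t) = exp (- t)"
  shows "stable_sol \<phi> r \<epsilon> (\<lambda>t. fst (Z t)) (\<lambda>t. snd (Z t))"
  unfolding stable_sol_def
proof (intro conjI allI impI)
  fix t :: real assume "0 \<le> t"
  then have derivative: "(Z has_vector_derivative jacobi_system (Kpar \<phi> r \<epsilon>) t (Z t)) (at t within {0..})"
    using Z unfolding jacobi_solution_on_def by simp
  show "((\<lambda>t. fst (Z t)) has_real_derivative snd (Z t)) (at t within {0..})"
    using has_vector_derivative_fst[OF derivative] by (simp add: jacobi_system_def)
  show "((\<lambda>t. snd (Z t)) has_real_derivative - Kpar \<phi> r \<epsilon> t * fst (Z t)) (at t within {0..})"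
    using has_vector_derivative_snd[OF derivative] by (simp add: jacobi_system_def)
next
  have "continuous_on {0..} Z"
    using Z unfolding jacobi_solution_on_def
    by (meson continuous_on_eq_continuous_within has_vector_derivative_continuous)
  then show "continuous_on {0..} (\<lambda>t. snd (Z t))"
    by (intro continuous_intros)
qed (use decay in simp)

lemma stable_sol_from_terminal_solution:
  assumes \<phi>: "cutoff \<phi>" and eps: "0 < \<epsilon>" and r: "0 < r"
    and V: "jacobi_solution_on (Kpar \<phi> 0 \<epsilon>) {0..\<epsilon>} V"
    and terminal: "V \<epsilon> = (exp (- \<epsilon>), - exp (- \<epsilon>))"
    and initial: "V 0 = (a, b)" and horizontal: "a * sin r + b * cos r = 0"
  shows "\<exists>Y D. stable_sol \<phi> r \<epsilon> Y D \<and> D 0 = 0"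
proof -
  let ?K = "Kpar \<phi> r \<epsilon>"
  define E where "E = exp (- r)"
  define rotation where
    "rotation t = E *\<^sub>R (a * cos (t - r) + b * sin (t - r), b * cos (t - r) - a * sin (t - r))" for t
  define shifted where "shifted t = E *\<^sub>R V (t - r)" for t
  define decaying where "decaying t = (exp (- t), - exp (- t))" for t :: real
  define W where "W t = (if t \<in> {r..r + \<epsilon>} then shifted t else decaying t)" for t
  define Z where "Z t = (if t \<in> {0..r} then rotation t else W t)" for t
  have rotation: "jacobi_solution_on ?K {0..r} rotation"
    unfolding rotation_def
    by (rule jacobi_solution_on_cong[OF _ jacobi_solution_on_scaleR[OF jacobi_solution_rotation]])
      (simp add: Kpar_before[OF \<phi> eps])
  have shifted: "jacobi_solution_on ?K {r..r + \<epsilon>} shifted"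
    using jacobi_solution_on_scaleR[OF jacobi_solution_on_shift[OF V, of r], of E]
    unfolding shifted_def by (simp add: add.commute Kpar_shift[symmetric])
  have decaying: "jacobi_solution_on ?K {r + \<epsilon>..} decaying"
    unfolding decaying_def
    by (rule jacobi_solution_on_cong[OF _ jacobi_solution_exp]) (simp add: Kpar_after[OF \<phi> eps])
  have shifted_decaying: "shifted (r + \<epsilon>) = decaying (r + \<epsilon>)"
    unfolding shifted_def decaying_def E_def using terminal by (simp add: exp_add[symmetric])
  have "jacobi_solution_on ?K {r..} W"
    unfolding W_def using eps shifted_decaying by (intro jacobi_solution_on_glue shifted decaying) auto
  moreover have "rotation r = W r"
    unfolding rotation_def W_def shifted_def using eps initial by simp
  ultimately have "jacobi_solution_on ?K {0..} Z"
    unfolding Z_def using r by (intro jacobi_solution_on_glue rotation) auto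
  moreover have "fst (Z t) = exp (- t)" if "r + \<epsilon> \<le> t" for t
    using that r eps shifted_decaying
    unfolding Z_def W_def by (auto simp: decaying_def)
  moreover have "snd (Z 0) = 0"
    using r horizontal unfolding Z_def rotation_def by (simp add: algebra_simps)
  ultimately show ?thesis
    using stable_sol_of_jacobi_solution by blast
qed

lemma ratio_near_minus_one:
  fixes p :: "real \<times> real"
  assumes p: "norm (p - (1, -1)) \<le> \<delta>" and \<delta>: "\<delta> \<le> 1/4"
  shows "\<bar>- snd p / fst p - 1\<bar> \<le> 3 * \<delta>"
proof -
  have "p - (1, -1) = (fst p - 1, snd p + 1)"
    by (simp add: prod_eq_iff)
  then have "\<bar>fst p - 1\<bar> \<le> \<delta>" "\<bar>snd p + 1\<bar> \<le> \<delta>"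
    using p norm_fst_le[of "fst p - 1" "snd p + 1"] norm_snd_le[of "snd p + 1" "fst p - 1"] by auto
  then have a: "fst p \<ge> 3/4" and sum: "\<bar>- snd p - fst p\<bar> \<le> 2 * \<delta>"
    using \<delta> by auto
  have "\<bar>- snd p / fst p - 1\<bar> = \<bar>- snd p - fst p\<bar> / fst p"
    using a by (simp add: field_simps)
  also have "\<dots> \<le> 2 * \<delta> / (3/4)"
    using a sum by (intro frac_le) auto
  also have "\<dots> \<le> 3 * \<delta>"
    using sum by simp
  finally show ?thesis .
qed

lemma stable_sol_with_zero_derivative_near_pi_div_4:
  assumes \<phi>: "cutoff \<phi>" and eps: "0 < \<epsilon>" "\<epsilon> \<le> 1/24"
  shows "\<exists>x. \<bar>x - 1\<bar> \<le> 18 * \<epsilon> \<and> (\<exists>Y D. stable_sol \<phi> (arctan x) \<epsilon> Y D \<and> D 0 = 0)"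
proof -
  define c where "c = (exp (- \<epsilon>), - exp (- \<epsilon>))"
  obtain V where V: "jacobi_solution_on (Kpar \<phi> 0 \<epsilon>) {0..\<epsilon>} V" "V \<epsilon> = c"
    and close: "norm (V 0 - c) \<le> 2 * \<epsilon> * norm c"
    using jacobi_terminal_value_problem[of \<epsilon> "Kpar \<phi> 0 \<epsilon>" c] eps
      continuous_on_Kpar[OF \<phi>] abs_Kpar_le_1[OF \<phi>] by auto
  have exp: "1 - \<epsilon> \<le> exp (- \<epsilon>)" "exp (- \<epsilon>) \<le> 1"
    using exp_ge_add_one_self[of "- \<epsilon>"] eps by auto
  have "norm c \<le> 2 * exp (- \<epsilon>)"
    using norm_Pair_le[of "exp (- \<epsilon>)" "- exp (- \<epsilon>)"] unfolding c_def by simp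
  then have "norm c \<le> 2"
    using exp by linarith
  then have "norm (V 0 - c) \<le> 4 * \<epsilon>"
    using close mult_left_mono[of "norm c" 2 "2 * \<epsilon>"] eps by linarith
  moreover have "norm (c - (1, -1)) \<le> 2 * \<epsilon>"
    using norm_Pair_le[of "exp (- \<epsilon>) - 1" "1 - exp (- \<epsilon>)"] exp unfolding c_def by simp
  ultimately have "norm ((V 0 - c) + (c - (1, -1))) \<le> 6 * \<epsilon>"
    using norm_triangle_ineq[of "V 0 - c" "c - (1, -1)"] by linarith
  then have x: "\<bar>- snd (V 0) / fst (V 0) - 1\<bar> \<le> 18 * \<epsilon>"
    using ratio_near_minus_one[of "V 0" "6 * \<epsilon>"] eps by (simp add: algebra_simps)
  define x where "x = - snd (V 0) / fst (V 0)"
  have "fst (V 0) \<noteq> 0" "0 < x"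
    using x eps unfolding x_def by auto
  have "sin (arctan x) = x * cos (arctan x)"
    using tan_arctan[of x] by (simp add: tan_def field_simps)
  then have "fst (V 0) * sin (arctan x) + snd (V 0) * cos (arctan x) = 0"
    using \<open>fst (V 0) \<noteq> 0\<close> unfolding x_def by (simp add: field_simps)
  then have "\<exists>Y D. stable_sol \<phi> (arctan x) \<epsilon> Y D \<and> D 0 = 0"
    using stable_sol_from_terminal_solution[OF \<phi> eps(1) _ V(1) _ prod.collapse[symmetric]] V(2) \<open>0 < x\<close>
    unfolding c_def by simp
  then show ?thesis
    using x unfolding x_def by blast
qed

theorem proposition3p1:
  fixes \<phi> :: "real \<Rightarrow> real"
  assumes "cutoff \<phi>"
  shows "\<forall>U::(real \<times> real) set. open U \<and> (pi / 4, 0) \<in> U \<longrightarrow>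
           (\<exists>r \<epsilon>. (r, \<epsilon>) \<in> U \<and> r > 0 \<and> \<epsilon> > 0 \<and> r + \<epsilon> < pi / 2 \<and>
              (\<exists>Y D. stable_sol \<phi> r \<epsilon> Y D \<and> D 0 = 0))"
proof (intro allI impI)
  fix U :: "(real \<times> real) set" assume "open U \<and> (pi / 4, 0) \<in> U"
  then obtain e where "e > 0" and U: "ball (pi / 4, 0) e \<subseteq> U"
    using open_contains_ball by blast
  define \<delta> where "\<delta> = min e (1/2)"
  have "\<delta> \<le> e" "\<delta> \<le> 1/2"
    unfolding \<delta>_def by auto
  obtain \<eta> where "\<eta> > 0" and arctan_near: "\<And>x. dist x 1 < \<eta> \<Longrightarrow> dist (arctan x) (pi / 4) < \<delta> / 2"
    using isCont_arctan[of 1, unfolded continuous_at_eps_delta] \<open>e > 0\<close>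
    unfolding \<delta>_def arctan_one by (metis half_gt_zero min_less_iff_conj zero_less_one zero_less_divide_iff)
  define \<epsilon> where "\<epsilon> = min (\<delta> / 4) (min (\<eta> / 19) (1/24))"
  have eps: "0 < \<epsilon>" "\<epsilon> \<le> 1/24" "\<epsilon> < \<delta> / 2" "18 * \<epsilon> < \<eta>"
    using \<open>e > 0\<close> \<open>\<eta> > 0\<close> unfolding \<epsilon>_def \<delta>_def by auto
  obtain x where x: "\<bar>x - 1\<bar> \<le> 18 * \<epsilon>" and sol: "\<exists>Y D. stable_sol \<phi> (arctan x) \<epsilon> Y D \<and> D 0 = 0"
    using stable_sol_with_zero_derivative_near_pi_div_4[OF assms eps(1,2)] by blast
  have r: "\<bar>arctan x - pi / 4\<bar> < \<delta> / 2"
    using arctan_near[of x] x eps by (simp add: dist_real_def)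
  have "dist (arctan x, \<epsilon>) (pi / 4, 0) \<le> \<bar>arctan x - pi / 4\<bar> + \<bar>\<epsilon>\<bar>"
    unfolding dist_Pair_Pair dist_real_def using sqrt_sum_squares_le_sum_abs by simp
  then have "(arctan x, \<epsilon>) \<in> U"
    using U r eps \<open>\<delta> \<le> e\<close> by (auto simp: dist_commute)
  moreover have "arctan x > 0"
    using x eps by simp
  moreover have "arctan x + \<epsilon> < pi / 2"
    using r eps pi_gt3 \<open>\<delta> \<le> 1/2\<close> unfolding abs_less_iff by linarith
  ultimately show "\<exists>r \<epsilon>. (r, \<epsilon>) \<in> U \<and> r > 0 \<and> \<epsilon> > 0 \<and> r + \<epsilon> < pi / 2 \<and>
      (\<exists>Y D. stable_sol \<phi> r \<epsilon> Y D \<and> D 0 = 0)"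
    using sol eps by blast
qed

end
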